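(* Let $\delta=(\delta_0,\dots,\delta_h)$ with $h\ge2$ be a characteristic $\delta$-sequence and let $k$ be an integer with $2\le k\le h$. Then (i) $\delta_k+M_k\in\Gamma(\delta_1,\dots,\delta_{k-1})$; (ii) $\delta_k+M_k-\delta_0\notin\Gamma(\delta_0,\dots,\delta_{k-1})$.
   Context: For a set $A$ of integers, $\Gamma(A)$ is the additive semigroup (containing $0$) generated by $A$. A characteristic $\delta$-sequence (in the sense of Abhyankar–Moh) is a sequence of positive integers $\delta_0,\dots,\delta_h$ such that, with $d_i=\gcd(\delta_0,\dots,\delta_{i-1})$ for $1\le i\le h+1$: $d_{h+1}=1$ and $d_i>d_{i+1}$ for $1\le i\le h$; $\delta_i\frac{d_i}{d_{i+1}}\in\Gamma(\delta_0,\dots,\delta_{i-1})$ for $1\le i\le h$; and $\delta_0>\delta_1$, $\delta_i\frac{d_i}{d_{i+1}}>\delta_{i+1}$ for $1\le i\le h-1$. The $q$- and $M$-sequences are defined by $M_1=-\delta_1$ and, for $i=2,\dots,h$, $q_i=\delta_{i-1}\frac{d_{i-1}}{d_i}-\delta_i$, $M_i=M_{i-1}+q_i$. *)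

theory Defs
  imports Main
begin

inductive_set Gamma :: "int set \<Rightarrow> int set" for A :: "int set" where
  zero: "0 \<in> Gamma A"
| add: "x \<in> Gamma A \<Longrightarrow> a \<in> A \<Longrightarrow> x + a \<in> Gamma A"

definition dseq :: "(nat \<Rightarrow> int) \<Rightarrow> nat \<Rightarrow> int" where
  "dseq \<delta> i = Gcd (\<delta> ` {0..<i})"

definition char_delta_seq :: "(nat \<Rightarrow> int) \<Rightarrow> nat \<Rightarrow> bool" where
  "char_delta_seq \<delta> h \<longleftrightarrow>
     (\<forall>i\<le>h. \<delta> i > 0) \<and>
     dseq \<delta> (h+1) = 1 \<and>
     (\<forall>i. 1 \<le> i \<and> i \<le> h \<longrightarrow> dseq \<delta> i > dseq \<delta> (i+1)) \<and>
     (\<forall>i. 1 \<le> i \<and> i \<le> h \<longrightarrow>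
        \<delta> i * (dseq \<delta> i div dseq \<delta> (i+1)) \<in> Gamma (\<delta> ` {0..<i})) \<and>
     \<delta> 0 > \<delta> 1 \<and>
     (\<forall>i. 1 \<le> i \<and> i \<le> h - 1 \<longrightarrow> \<delta> i * (dseq \<delta> i div dseq \<delta> (i+1)) > \<delta> (i+1))"

definition qseq :: "(nat \<Rightarrow> int) \<Rightarrow> nat \<Rightarrow> int" where
  "qseq \<delta> i = \<delta> (i-1) * (dseq \<delta> (i-1) div dseq \<delta> i) - \<delta> i"

fun Mseq :: "(nat \<Rightarrow> int) \<Rightarrow> nat \<Rightarrow> int" where
  "Mseq \<delta> 0 = 0"
| "Mseq \<delta> (Suc 0) = - \<delta> 1"
| "Mseq \<delta> (Suc (Suc n)) = Mseq \<delta> (Suc n) + qseq \<delta> (Suc (Suc n))"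

end

theory Submission
  imports Defs
begin

text \<open>
  Write n_j = d_j / d_{j+1}. Telescoping the definition of the M-sequence gives
  \<delta>_k + M_k = \<Sum>_{1 \<le> j < k} (n_j - 1) \<delta>_j, which makes (i) immediate. For (ii) one shows by
  induction on m that no integer \<Sum>_{1 \<le> j < m} a_j \<delta>_j - c \<delta>_0 with c > 0 and 0 \<le> a_j < n_j
  lies in \<Gamma>(\<delta>_0, ..., \<delta>_{m-1}): a representation g + c' \<delta>_m of such an element can be
  normalised to 0 \<le> c' < n_m because n_m \<delta>_m \<in> \<Gamma>(\<delta>_0, ..., \<delta>_{m-1}), and then
  divisibility by d_m forces c' = a_m, since n_m is coprime to \<delta>_m / d_{m+1}.
\<close>

lemma Gamma_add:
  assumes "x \<in> Gamma A" "y \<in> Gamma A"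
  shows "x + y \<in> Gamma A"
  using assms(2)
proof induction
  case (add y a)
  then show ?case using Gamma.add[of "x + y" A a] by (simp add: add.assoc)
qed (simp add: assms(1))

lemma Gamma_generator: "a \<in> A \<Longrightarrow> a \<in> Gamma A"
  using Gamma.add[OF Gamma.zero] by simp

lemma Gamma_mult: "x \<in> Gamma A \<Longrightarrow> c \<ge> 0 \<Longrightarrow> c * x \<in> Gamma A"
proof -
  assume x: "x \<in> Gamma A" and "c \<ge> 0"
  have "int n * x \<in> Gamma A" for n
    by (induction n) (auto intro: Gamma.zero Gamma_add x simp: distrib_right)
  from this[of "nat c"] \<open>c \<ge> 0\<close> show ?thesis by simp
qed

lemma Gamma_sum: "finite S \<Longrightarrow> (\<And>i. i \<in> S \<Longrightarrow> f i \<in> Gamma A) \<Longrightarrow> sum f S \<in> Gamma A"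
  by (induction rule: finite_induct) (auto intro: Gamma.zero Gamma_add)

lemma Gamma_nonneg: "x \<in> Gamma A \<Longrightarrow> (\<And>a. a \<in> A \<Longrightarrow> 0 \<le> a) \<Longrightarrow> 0 \<le> x"
  by (induction rule: Gamma.induct) auto

lemma Gamma_dvd: "x \<in> Gamma A \<Longrightarrow> (\<And>a. a \<in> A \<Longrightarrow> d dvd a) \<Longrightarrow> d dvd x"
  by (induction rule: Gamma.induct) auto

lemma Gamma_insertE:
  assumes "x \<in> Gamma (insert b A)"
  obtains g c where "g \<in> Gamma A" "c \<ge> 0" "x = g + c * b"
proof -
  from assms have "\<exists>g\<in>Gamma A. \<exists>c\<ge>0. x = g + c * b"
  proof (induction rule: Gamma.induct)
    case zero
    show ?case by (intro bexI[of _ 0] exI[of _ 0]) (auto intro: Gamma.zero)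
  next
    case (add x a)
    then obtain g c where g: "g \<in> Gamma A" "c \<ge> 0" "x = g + c * b" by blast
    show ?case
    proof (cases "a = b")
      case True
      with g show ?thesis by (intro bexI[of _ g] exI[of _ "c + 1"]) (auto simp: distrib_right)
    next
      case False
      with add g show ?thesis by (intro bexI[of _ "g + a"] exI[of _ c]) (auto intro: Gamma.add)
    qed
  qed
  with that show thesis by blast
qed

text \<open>
  \<open>b\<close> has order \<open>n\<close> modulo the group \<open>d\<int>\<close> in which \<open>\<Gamma>(A)\<close> lives, and \<open>n b \<in> \<Gamma>(A)\<close>, so adding fewer than \<open>n\<close> copies of \<open>b\<close> cannot
  move an element outside \<open>\<Gamma>(A)\<close> into \<open>\<Gamma>(A \<union> {b})\<close>.
\<close>
lemma add_mult_notin_Gamma_insert: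
  fixes A :: "int set"
  assumes y: "y \<notin> Gamma A" "d dvd y"
    and A: "\<And>a. a \<in> A \<Longrightarrow> d dvd a"
    and nb: "n * b \<in> Gamma A"
    and factor: "d = n * e" "b = b' * e" "e \<noteq> 0" "coprime n b'"
    and a: "0 \<le> a" "a < n"
  shows "y + a * b \<notin> Gamma (insert b A)"
proof
  assume "y + a * b \<in> Gamma (insert b A)"
  then obtain g c where g: "g \<in> Gamma A" "c \<ge> 0" "y + a * b = g + c * b"
    by (rule Gamma_insertE)
  have n: "n > 0" using a by simp
  define r where "r = c mod n"
  define g' where "g' = g + (c div n) * (n * b)"
  have "c div n \<ge> 0" using g(2) n by (simp add: pos_imp_zdiv_nonneg_iff)
  then have g': "g' \<in> Gamma A"
    unfolding g'_def by (intro Gamma_add[OF g(1)] Gamma_mult[OF nb])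
  have r: "0 \<le> r" "r < n" unfolding r_def using n by simp_all
  have eq: "y + a * b = g' + r * b"
    using g(3) div_mult_mod_eq[of c n] unfolding g'_def r_def by algebra
  have "d dvd g' - y" using Gamma_dvd[OF g' A] y(2) by simp
  also have "g' - y = ((a - r) * b') * e" using eq factor(2) by algebra
  finally have "n dvd (a - r) * b'" using factor(1,3) by simp
  with factor(4) have "n dvd a - r" by (simp add: coprime_dvd_mult_left_iff)
  with a r have "a = r" using dvd_imp_le_int[of "a - r" n] by (cases "a = r") auto
  with eq have "y = g'" by simp
  with y(1) g' show False by simp
qed

lemma dseq_Suc: "dseq \<delta> (Suc m) = gcd (\<delta> m) (dseq \<delta> m)"
  unfolding dseq_def by (simp add: atLeast0_lessThan_Suc)

lemma dseq_dvd: "j < i \<Longrightarrow> dseq \<delta> i dvd \<delta> j"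
  unfolding dseq_def by (rule Gcd_dvd) auto

lemma dseq_pos:
  assumes "\<delta> 0 > 0" "i \<ge> 1"
  shows "dseq \<delta> i > 0"
proof -
  have "dseq \<delta> i \<noteq> 0" using dseq_dvd[of 0 i \<delta>] assms by auto
  moreover have "dseq \<delta> i \<ge> 0" unfolding dseq_def by (rule Gcd_int_greater_eq_0)
  ultimately show ?thesis by simp
qed

definition nseq :: "(nat \<Rightarrow> int) \<Rightarrow> nat \<Rightarrow> int" where
  "nseq \<delta> j = dseq \<delta> j div dseq \<delta> (Suc j)"

lemma dseq_eq_nseq_mult: "dseq \<delta> j = nseq \<delta> j * dseq \<delta> (Suc j)"
  unfolding nseq_def by (simp add: dseq_Suc)

lemma coprime_nseq_div_dseq:
  assumes "dseq \<delta> (Suc j) \<noteq> 0"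
  shows "coprime (nseq \<delta> j) (\<delta> j div dseq \<delta> (Suc j))"
  using div_gcd_coprime[of "dseq \<delta> j" "\<delta> j"] assms
  unfolding nseq_def dseq_Suc by (auto simp: gcd.commute)

lemma delta_plus_Mseq_eq_sum:
  "k \<ge> 1 \<Longrightarrow> \<delta> k + Mseq \<delta> k = (\<Sum>j\<in>{1..<k}. (nseq \<delta> j - 1) * \<delta> j)"
proof (induction k rule: nat_induct_at_least)
  case (Suc m)
  then obtain n where "m = Suc n" by (cases m) auto
  then have "\<delta> (Suc m) + Mseq \<delta> (Suc m) = (\<delta> m + Mseq \<delta> m) + (nseq \<delta> m - 1) * \<delta> m"
    by (simp add: qseq_def nseq_def algebra_simps)
  with Suc show ?case by simp
qed simp

context
  fixes \<delta> :: "nat \<Rightarrow> int" and h :: nat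
  assumes char: "char_delta_seq \<delta> h"
begin

lemma delta0_pos: "\<delta> 0 > 0"
  using char unfolding char_delta_seq_def by auto

lemma dseq_Suc_pos: "dseq \<delta> (Suc j) > 0"
  using dseq_pos[of \<delta> "Suc j"] delta0_pos by simp

lemma nseq_ge_2:
  assumes "1 \<le> j" "j \<le> h"
  shows "nseq \<delta> j \<ge> 2"
proof -
  have "nseq \<delta> j * dseq \<delta> (Suc j) > 1 * dseq \<delta> (Suc j)"
    using char assms unfolding char_delta_seq_def dseq_eq_nseq_mult[symmetric] by auto
  then show ?thesis using dseq_Suc_pos[of j] by (simp add: mult_less_cancel_right)
qed

lemma nseq_mult_in_Gamma:
  "1 \<le> j \<Longrightarrow> j \<le> h \<Longrightarrow> nseq \<delta> j * \<delta> j \<in> Gamma (\<delta> ` {0..<j})"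
  using char unfolding char_delta_seq_def nseq_def by (auto simp: mult.commute)

lemma sum_minus_mult_delta0_notin_Gamma:
  assumes "1 \<le> m" "m \<le> h + 1" "c > 0"
    and "\<And>j. 1 \<le> j \<Longrightarrow> j < m \<Longrightarrow> 0 \<le> a j \<and> a j < nseq \<delta> j"
  shows "(\<Sum>j\<in>{1..<m}. a j * \<delta> j) - c * \<delta> 0 \<notin> Gamma (\<delta> ` {0..<m})"
  using assms
proof (induction m rule: nat_induct_at_least)
  case base
  have "\<not> 0 \<le> - c * \<delta> 0" using mult_pos_pos[OF \<open>c > 0\<close> delta0_pos] by simp
  then show ?case using Gamma_nonneg[of _ "{\<delta> 0}"] delta0_pos by force
next
  case (Suc m)
  let ?y = "(\<Sum>j\<in>{1..<m}. a j * \<delta> j) - c * \<delta> 0"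
  have "?y + a m * \<delta> m \<notin> Gamma (insert (\<delta> m) (\<delta> ` {0..<m}))"
  proof (rule add_mult_notin_Gamma_insert)
    show "?y \<notin> Gamma (\<delta> ` {0..<m})" using Suc by simp
    show "dseq \<delta> m dvd ?y"
      by (intro dvd_diff dvd_mult dvd_sum dseq_dvd) (use Suc in auto)
    show "nseq \<delta> m * \<delta> m \<in> Gamma (\<delta> ` {0..<m})"
      using Suc by (intro nseq_mult_in_Gamma) auto
    show "\<delta> m = (\<delta> m div dseq \<delta> (Suc m)) * dseq \<delta> (Suc m)"
      by (simp add: dseq_Suc)
    show "coprime (nseq \<delta> m) (\<delta> m div dseq \<delta> (Suc m))"
      using dseq_Suc_pos by (intro coprime_nseq_div_dseq) (auto simp: less_le)
  qed (use Suc dseq_Suc_pos[of m] in \<open>auto intro: dseq_dvd dseq_eq_nseq_mult\<close>)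
  then show ?case
    using Suc.hyps by (simp add: atLeast0_lessThan_Suc algebra_simps)
qed

end

theorem lemma7p1:
  fixes \<delta> :: "nat \<Rightarrow> int" and h k :: nat
  assumes "char_delta_seq \<delta> h" and "h \<ge> 2" and "2 \<le> k" and "k \<le> h"
  shows "\<delta> k + Mseq \<delta> k \<in> Gamma (\<delta> ` {1..<k}) \<and>
         \<delta> k + Mseq \<delta> k - \<delta> 0 \<notin> Gamma (\<delta> ` {0..<k})"
proof
  have sum: "\<delta> k + Mseq \<delta> k = (\<Sum>j\<in>{1..<k}. (nseq \<delta> j - 1) * \<delta> j)"
    using assms by (simp add: delta_plus_Mseq_eq_sum)
  have n: "0 \<le> nseq \<delta> j - 1" if "j \<in> {1..<k}" for j
    using nseq_ge_2[OF assms(1), of j] that assms by simp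
  show "\<delta> k + Mseq \<delta> k \<in> Gamma (\<delta> ` {1..<k})"
    unfolding sum using n by (intro Gamma_sum Gamma_mult Gamma_generator) auto
  have "(\<Sum>j\<in>{1..<k}. (nseq \<delta> j - 1) * \<delta> j) - 1 * \<delta> 0 \<notin> Gamma (\<delta> ` {0..<k})"
    using n assms by (intro sum_minus_mult_delta0_notin_Gamma[OF assms(1)]) auto
  then show "\<delta> k + Mseq \<delta> k - \<delta> 0 \<notin> Gamma (\<delta> ` {0..<k})"
    unfolding sum by simp
qed

end
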